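(* Let $\mathbf K\in\mathbb R^{n\times d}$ have rows $\mathbf k_1,\dots,\mathbf k_n$, let $R_{\mathbf K}=\|\mathbf K\|_{2,\infty}>0$, $\beta>0$, $\tau>0$. Let $\mathbf H_\tau=\big(\exp(\tfrac{\beta}{\tau^2}\langle\mathbf k_i,\mathbf k_l\rangle)\big)_{i,l\in[n]}$ and, for $s\in\{0,1,2,\dots\}$, $\mathbf T^s_{il}=\sum_{p=0}^s\frac{1}{p!}\big(\tfrac{\beta}{\tau^2}\langle\mathbf k_i,\mathbf k_l\rangle\big)^p$. For $\varepsilon>0$ define $$\tilde s(\varepsilon)\defeq\frac{\log(n/\varepsilon)+\beta R_{\mathbf K}^2/\tau^2}{W_0\!\left(\frac{\log(n/\varepsilon)\,\tau^2}{e\beta R_{\mathbf K}^2}+\frac1e\right)}.$$ Then $\|\mathbf H_\tau-\mathbf T^s\|_*\le\varepsilon$ for all integers $s\ge\lfloor\tilde s(\varepsilon)\rfloor$.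
   Context: $W_0$ is the principal branch of the Lambert W function ($w=W_0(z)$ is the unique solution $w>-1$ of $we^w=z$ for $z>-1/e$). $\|\mathbf K\|_{2,\infty}$ is the maximal Euclidean row norm, and $\|\cdot\|_*$ the nuclear norm. *)

theory Defs
  imports "HOL-Analysis.Analysis"
begin

definition lambert_W0 :: "real \<Rightarrow> real" where
  "lambert_W0 z = (THE w. w \<ge> -1 \<and> w * exp w = z)"

definition psd_matrix :: "real^'n^'n \<Rightarrow> bool" where
  "psd_matrix B \<longleftrightarrow> transpose B = B \<and> (\<forall>x. 0 \<le> x \<bullet> (B *v x))"

definition psd_sqrt :: "real^'n^'n \<Rightarrow> real^'n^'n" where
  "psd_sqrt M = (THE B. psd_matrix B \<and> B ** B = M)"

definition nuclear_norm :: "real^'m^'n \<Rightarrow> real" where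
  "nuclear_norm A = trace (psd_sqrt (transpose A ** A))"

definition norm_2_inf :: "real^'d^'n \<Rightarrow> real" where
  "norm_2_inf K = Max (range (\<lambda>i. norm (K $ i)))"

end

theory Submission
  imports Defs
begin

text \<open>Write c = beta / tau^2, a = c R^2 and m = s + 1. The error matrix H - T s has entries
  exp_tail s (c <k_i, k_l>) = sum over p > s of c^p <k_i, k_l>^p / p!, a nonnegative combination
  of Hadamard powers of the Gram matrix, each of which is again a Gram matrix. So the error
  matrix is positive semidefinite, and since PSD square roots are unique its nuclear norm is its
  trace: a sum of n Taylor remainders of exp at points of [0, a]. The Lagrange remainder together
  with a^m / m! \<le> (e a / m)^m bounds each of them by exp (a - m ln (m / (e a))), and the
  threshold s_tilde is the solution of m ln (m / (e a)) = ln (n / epsilon) + a, obtained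
  through W_0.\<close>

lemma transpose_diff: "transpose ((A::'a::comm_ring_1^'n^'m) - B) = transpose A - transpose B"
  by (simp add: transpose_def vec_eq_iff)

lemma matrix_add_rdistrib: "((A::'a::semiring_1^'n^'m) + B) ** C = A ** C + B ** C"
  by (simp add: matrix_matrix_mult_def vec_eq_iff sum.distrib distrib_right)

lemma matrix_diff_rdistrib: "((A::'a::ring_1^'n^'m) - B) ** C = A ** C - B ** C"
  by (simp add: matrix_matrix_mult_def vec_eq_iff sum_subtractf left_diff_distrib)

lemma matrix_diff_ldistrib: "(A::'a::ring_1^'n^'m) ** (B - C) = A ** B - A ** C"
  by (simp add: matrix_matrix_mult_def vec_eq_iff sum_subtractf right_diff_distrib)

lemma symmetric_matrix_inner_commute:
  fixes S :: "real^'n^'n"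
  assumes "transpose S = S"
  shows "x \<bullet> (S *v y) = y \<bullet> (S *v x)"
  by (metis assms dot_lmul_matrix inner_commute transpose_matrix_vector)

lemma linear_coeff_eq_0_if_quadratic_nonneg:
  fixes b c :: real
  assumes "\<And>t. 0 \<le> 2 * t * b + t\<^sup>2 * c" and "0 \<le> c"
  shows "b = 0"
proof (rule ccontr)
  assume "b \<noteq> 0"
  define t where "t = - b / (c + 1)"
  have "c + 1 \<noteq> 0" using \<open>0 \<le> c\<close> by linarith
  then have "2 * t * b + t\<^sup>2 * c = - b\<^sup>2 * (c + 2) / (c + 1)\<^sup>2"
    by (simp add: t_def divide_simps power2_eq_square) (simp add: algebra_simps)
  also have "\<dots> < 0"
    using \<open>b \<noteq> 0\<close> \<open>0 \<le> c\<close> by (intro divide_neg_pos mult_neg_pos) auto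
  finally show False using assms(1)[of t] by linarith
qed

lemma psd_matrix_quadratic_form_eq_0:
  fixes S :: "real^'n^'n"
  assumes "psd_matrix S" and "x \<bullet> (S *v x) = 0"
  shows "S *v x = 0"
proof -
  have sym: "transpose S = S" and pos: "\<And>x. 0 \<le> x \<bullet> (S *v x)"
    using assms(1) by (auto simp: psd_matrix_def)
  define y where "y = S *v x"
  have "0 \<le> 2 * t * (y \<bullet> y) + t\<^sup>2 * (y \<bullet> (S *v y))" for t
  proof -
    have "0 \<le> (x + t *\<^sub>R y) \<bullet> (S *v (x + t *\<^sub>R y))" by (rule pos)
    also have "\<dots> = x \<bullet> (S *v x) + t * (x \<bullet> (S *v y)) + t * (y \<bullet> (S *v x)) + t\<^sup>2 * (y \<bullet> (S *v y))"
      by (simp add: algebra_simps inner_add_left inner_add_right power2_eq_square)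
    finally show ?thesis
      using assms(2) symmetric_matrix_inner_commute[OF sym, of x y] by (simp add: y_def)
  qed
  then have "y \<bullet> y = 0" by (rule linear_coeff_eq_0_if_quadratic_nonneg[OF _ pos])
  then show ?thesis by (simp add: y_def)
qed

lemma trace_sandwich:
  fixes S D :: "real^'n^'n"
  assumes "transpose D = D"
  shows "trace (D ** S ** D) = (\<Sum>j\<in>UNIV. D $ j \<bullet> (S *v D $ j))"
proof -
  have sym: "D $ b $ j = D $ j $ b" for b j
    using assms by (metis transpose_def vec_lambda_beta)
  have "trace (D ** S ** D) = (\<Sum>j\<in>UNIV. \<Sum>b\<in>UNIV. \<Sum>a\<in>UNIV. D$j$a * S$a$b * D$j$b)"
    by (simp add: trace_def matrix_matrix_mult_def sym sum_distrib_right)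
  also have "\<dots> = (\<Sum>j\<in>UNIV. \<Sum>a\<in>UNIV. \<Sum>b\<in>UNIV. D$j$a * S$a$b * D$j$b)"
    by (intro sum.cong refl sum.swap)
  also have "\<dots> = (\<Sum>j\<in>UNIV. D $ j \<bullet> (S *v D $ j))"
    by (simp add: inner_vec_def matrix_vector_mult_def sum_distrib_left mult.assoc)
  finally show ?thesis .
qed

lemma trace_sandwich_psd_nonneg:
  fixes S D :: "real^'n^'n"
  assumes "transpose D = D" and "psd_matrix S"
  shows "0 \<le> trace (D ** S ** D)"
  using assms by (auto simp: trace_sandwich psd_matrix_def intro: sum_nonneg)

lemma trace_sandwich_psd_eq_0:
  fixes S D :: "real^'n^'n"
  assumes "transpose D = D" and "psd_matrix S" and "trace (D ** S ** D) = 0"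
  shows "S ** D = 0"
proof -
  have "D $ j \<bullet> (S *v D $ j) = 0" for j
    using assms by (subst (asm) trace_sandwich) (auto simp: psd_matrix_def sum_nonneg_eq_0_iff)
  then have cols: "S *v D $ j = 0" for j
    using psd_matrix_quadratic_form_eq_0[OF assms(2)] by blast
  have "D $ b $ j = D $ j $ b" for b j
    using assms(1) by (metis transpose_def vec_lambda_beta)
  then have "(S ** D) $ a $ j = (S *v D $ j) $ a" for a j
    by (simp add: matrix_matrix_mult_def matrix_vector_mult_def)
  then show ?thesis using cols by (simp add: vec_eq_iff)
qed

lemma psd_matrix_square_eq_imp_eq:
  fixes B C :: "real^'n^'n"
  assumes B: "psd_matrix B" and C: "psd_matrix C" and sq: "B ** B = C ** C"
  shows "B = C"
proof -
  define D where "D = B - C"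
  have "transpose B = B" "transpose C = C" using B C by (auto simp: psd_matrix_def)
  then have D_sym: "transpose D = D" by (simp add: D_def transpose_diff)
  have "(B + C) ** D + D ** (B + C) = 0"
    using sq by (simp add: D_def matrix_add_ldistrib matrix_add_rdistrib matrix_diff_ldistrib
        matrix_diff_rdistrib algebra_simps)
  then have "D ** (B + C) ** D + D ** D ** (B + C) = 0"
    by (metis matrix_add_ldistrib matrix_mul_assoc times0_right)
  then have "trace (D ** (B + C) ** D) + trace (D ** D ** (B + C)) = 0"
    by (metis trace_add trace_0 mat_0)
  moreover have "trace (D ** D ** (B + C)) = trace (D ** (B + C) ** D)"
    by (metis matrix_mul_assoc trace_mul_sym)
  ultimately have "trace (D ** B ** D) + trace (D ** C ** D) = 0"
    by (simp add: matrix_add_ldistrib matrix_add_rdistrib trace_add)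
  with trace_sandwich_psd_nonneg[OF D_sym B] trace_sandwich_psd_nonneg[OF D_sym C]
  have "B ** D = 0" and "C ** D = 0"
    using trace_sandwich_psd_eq_0[OF D_sym B] trace_sandwich_psd_eq_0[OF D_sym C] by auto
  then have "trace (D ** mat 1 ** D) = 0"
    by (simp add: D_def matrix_diff_rdistrib trace_0 flip: mat_0)
  moreover have "psd_matrix (mat 1 :: real^'n^'n)" by (simp add: psd_matrix_def)
  ultimately have "mat 1 ** D = 0" by (rule trace_sandwich_psd_eq_0[OF D_sym, rotated])
  then show ?thesis by (simp add: D_def)
qed

lemma nuclear_norm_psd_matrix:
  fixes A :: "real^'n^'n"
  assumes "psd_matrix A"
  shows "nuclear_norm A = trace A"
proof -
  have "transpose A = A" using assms by (simp add: psd_matrix_def)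
  then have "psd_sqrt (transpose A ** A) = A"
    unfolding psd_sqrt_def using assms psd_matrix_square_eq_imp_eq by (intro the_equality) auto
  then show ?thesis by (simp add: nuclear_norm_def)
qed

lemma quadratic_form_inner_power_nonneg:
  fixes k :: "'i \<Rightarrow> 'a::euclidean_space"
  shows "0 \<le> (\<Sum>i\<in>I. \<Sum>l\<in>I. x i * x l * (k i \<bullet> k l) ^ p)"
proof (induction p arbitrary: x)
  case 0
  have "(\<Sum>i\<in>I. \<Sum>l\<in>I. x i * x l * (k i \<bullet> k l) ^ 0) = (\<Sum>i\<in>I. x i)\<^sup>2"
    by (simp add: power2_eq_square sum_product)
  then show ?case by simp
next
  case (Suc p)
  have "x i * x l * (k i \<bullet> k l) ^ Suc p
      = (x i * x l * (k i \<bullet> k l) ^ p) * (\<Sum>b\<in>Basis. (k i \<bullet> b) * (k l \<bullet> b))" for i l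
    by (simp add: euclidean_inner[of "k i" "k l", symmetric])
  also have "\<dots> i l = (\<Sum>b\<in>Basis. (x i * (k i \<bullet> b)) * (x l * (k l \<bullet> b)) * (k i \<bullet> k l) ^ p)" for i l
    by (simp add: sum_distrib_left mult_ac)
  finally have "(\<Sum>i\<in>I. \<Sum>l\<in>I. x i * x l * (k i \<bullet> k l) ^ Suc p)
      = (\<Sum>i\<in>I. \<Sum>l\<in>I. \<Sum>b\<in>Basis. (x i * (k i \<bullet> b)) * (x l * (k l \<bullet> b)) * (k i \<bullet> k l) ^ p)"
    by simp
  also have "\<dots> = (\<Sum>i\<in>I. \<Sum>b\<in>Basis. \<Sum>l\<in>I. (x i * (k i \<bullet> b)) * (x l * (k l \<bullet> b)) * (k i \<bullet> k l) ^ p)"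
    by (intro sum.cong refl sum.swap)
  also have "\<dots> = (\<Sum>b\<in>Basis. \<Sum>i\<in>I. \<Sum>l\<in>I. (x i * (k i \<bullet> b)) * (x l * (k l \<bullet> b)) * (k i \<bullet> k l) ^ p)"
    by (rule sum.swap)
  also have "\<dots> \<ge> 0"
    by (intro sum_nonneg Suc.IH)
  finally show ?case .
qed

definition exp_tail :: "nat \<Rightarrow> real \<Rightarrow> real" where
  "exp_tail s t = exp t - (\<Sum>p = 0..s. t ^ p / fact p)"

lemma exp_tail_sums: "(\<lambda>p. if s < p then t ^ p / fact p else 0) sums exp_tail s t"
proof -
  have "(\<lambda>p. t ^ p / fact p) sums exp t"
    using exp_converges[of t] by (simp add: divide_inverse mult.commute)
  from sums_diff[OF this sums_If_finite_set[of "{0..s}"]]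
  have "(\<lambda>p. t ^ p / fact p - (if p \<in> {0..s} then t ^ p / fact p else 0)) sums exp_tail s t"
    by (simp add: exp_tail_def)
  then show ?thesis by (rule sums_cong[THEN iffD1, rotated]) auto
qed

lemma psd_matrix_exp_tail_gram:
  fixes k :: "'n::finite \<Rightarrow> 'a::euclidean_space"
  assumes "0 \<le> c"
  shows "psd_matrix (\<chi> i l. exp_tail s (c * (k i \<bullet> k l)))" (is "psd_matrix ?A")
  unfolding psd_matrix_def
proof (intro conjI allI)
  show "transpose ?A = ?A" by (simp add: transpose_def vec_eq_iff inner_commute)
next
  fix x :: "real^'n"
  let ?term = "\<lambda>p i l. x$i * x$l * (if s < p then (c * (k i \<bullet> k l)) ^ p / fact p else 0)"
  have form: "x \<bullet> (?A *v x) = (\<Sum>i\<in>UNIV. \<Sum>l\<in>UNIV. x$i * x$l * exp_tail s (c * (k i \<bullet> k l)))"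
    by (simp add: inner_vec_def matrix_vector_mult_def sum_distrib_left mult_ac)
  have form_sums: "(\<lambda>p. \<Sum>i\<in>UNIV. \<Sum>l\<in>UNIV. ?term p i l)
      sums (\<Sum>i\<in>UNIV. \<Sum>l\<in>UNIV. x$i * x$l * exp_tail s (c * (k i \<bullet> k l)))"
    by (intro sums_sum sums_mult exp_tail_sums)
  have terms_nonneg: "0 \<le> (\<Sum>i\<in>UNIV. \<Sum>l\<in>UNIV. ?term p i l)" for p
  proof (cases "s < p")
    case True
    then have "(\<Sum>i\<in>UNIV. \<Sum>l\<in>UNIV. ?term p i l)
        = c ^ p / fact p * (\<Sum>i\<in>UNIV. \<Sum>l\<in>UNIV. x$i * x$l * (k i \<bullet> k l) ^ p)"
      by (simp add: sum_distrib_left power_mult_distrib mult_ac)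
    also have "\<dots> \<ge> 0"
      using assms by (intro mult_nonneg_nonneg divide_nonneg_nonneg zero_le_power
          quadratic_form_inner_power_nonneg) auto
    finally show ?thesis .
  qed simp
  show "0 \<le> x \<bullet> (?A *v x)"
    unfolding form by (rule sums_le[OF terms_nonneg sums_zero form_sums])
qed

lemma exp_tail_le_Lagrange:
  assumes "0 \<le> t" and "t \<le> a"
  shows "exp_tail s t \<le> exp a * a ^ Suc s / fact (Suc s)"
proof -
  obtain u where "\<bar>u\<bar> \<le> \<bar>t\<bar>"
    and "exp t = (\<Sum>p<Suc s. t ^ p / fact p) + exp u / fact (Suc s) * t ^ Suc s"
    using Maclaurin_exp_le[of t "Suc s"] by blast
  then have "exp_tail s t = exp u * t ^ Suc s / fact (Suc s)" and "u \<le> a"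
    using assms by (simp_all add: exp_tail_def atLeast0AtMost lessThan_Suc_atMost)
  moreover have "exp u * t ^ Suc s \<le> exp a * a ^ Suc s"
    using \<open>u \<le> a\<close> assms by (intro mult_mono power_mono) auto
  ultimately show ?thesis by (simp add: divide_right_mono)
qed

lemma exp_tail_le_exp:
  assumes "0 \<le> t" and "t \<le> a"
  shows "exp_tail s t \<le> exp a"
proof -
  have "0 \<le> (\<Sum>p = 0..s. t ^ p / fact p)" using assms by (intro sum_nonneg) auto
  moreover have "exp t \<le> exp a" using assms by simp
  ultimately show ?thesis unfolding exp_tail_def by linarith
qed

lemma power_div_fact_le_exp:
  fixes x :: real
  assumes "0 \<le> x"
  shows "x ^ n / fact n \<le> exp x"
proof -
  obtain u where "exp x = (\<Sum>p<Suc n. x ^ p / fact p) + exp u / fact (Suc n) * x ^ Suc n"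
    using Maclaurin_exp_le[of x "Suc n"] by blast
  moreover have "x ^ n / fact n \<le> (\<Sum>p<Suc n. x ^ p / fact p)"
    using assms by (intro member_le_sum) auto
  ultimately show ?thesis using assms by simp
qed

lemma power_div_fact_le:
  fixes a :: real
  assumes "0 \<le> a" and "0 < m"
  shows "a ^ m / fact m \<le> (exp 1 * a / m) ^ m"
proof -
  have "a ^ m / fact m = (real m ^ m / fact m) * (a / m) ^ m"
    using assms by (simp add: power_divide)
  also have "\<dots> \<le> exp (real m) * (a / m) ^ m"
    using assms by (intro mult_right_mono power_div_fact_le_exp) auto
  also have "exp (real m) = exp 1 ^ m"
    using exp_of_nat_mult[of m 1] by simp
  also have "exp 1 ^ m * (a / m) ^ m = (exp 1 * a / m) ^ m"
    by (simp add: power_mult_distrib flip: times_divide_eq_right)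
  finally show ?thesis .
qed

lemma exp_tail_le_exp_minus:
  assumes "0 \<le> t" and "t \<le> a" and "0 < a"
    and L: "L + a \<le> max 0 (real (Suc s) * ln (Suc s / (exp 1 * a)))"
  shows "exp_tail s t \<le> exp (- L)"
proof (cases "L + a \<le> 0")
  case True
  then have "exp a \<le> exp (- L)" by simp
  then show ?thesis using exp_tail_le_exp[OF assms(1,2), of s] by linarith
next
  case False
  define m where "m = Suc s"
  then have L_le: "L + a \<le> m * ln (m / (exp 1 * a))" and "0 < real m" using L False by simp_all
  have "exp_tail s t \<le> exp a * (a ^ m / fact m)"
    using exp_tail_le_Lagrange[OF assms(1,2)] by (simp add: m_def)
  also have "\<dots> \<le> exp a * (exp 1 * a / m) ^ m"
    using assms by (intro mult_left_mono power_div_fact_le) (auto simp: m_def)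
  also have "(exp 1 * a / m) ^ m = exp (m * ln (exp 1 * a / m))"
    using assms \<open>0 < real m\<close> by (subst ln_realpow[symmetric]) auto
  also have "ln (exp 1 * a / m) = - ln (m / (exp 1 * a))"
    using assms \<open>0 < real m\<close> by (simp add: ln_div)
  also have "exp a * exp (m * - ln (m / (exp 1 * a))) \<le> exp a * exp (- (L + a))"
    using L_le by simp
  also have "\<dots> = exp (- L)"
    by (simp flip: exp_add)
  finally show ?thesis .
qed

lemma mult_exp_strict_mono:
  fixes v w :: real
  assumes "-1 \<le> v" and "v < w"
  shows "v * exp v < w * exp w"
proof (rule DERIV_pos_imp_increasing_open[OF \<open>v < w\<close>])
  fix x assume "v < x" "x < w"
  have "DERIV (\<lambda>x. x * exp x) x :> exp x * (1 + x)"
    by (auto intro!: derivative_eq_intros simp: algebra_simps)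
  moreover have "exp x * (1 + x) > 0" using \<open>-1 \<le> v\<close> \<open>v < x\<close> by simp
  ultimately show "\<exists>y. DERIV (\<lambda>x. x * exp x) x :> y \<and> 0 < y" by blast
qed (intro continuous_intros)

lemma lambert_W0_mult_exp:
  assumes "-1 \<le> w"
  shows "lambert_W0 (w * exp w) = w"
  unfolding lambert_W0_def
proof (rule the_equality)
  fix v assume "-1 \<le> v \<and> v * exp v = w * exp w"
  then show "v = w"
    using mult_exp_strict_mono assms by (metis linorder_neqE_linordered_idom less_irrefl)
qed (use assms in simp)

lemma lambert_W0_inverse:
  assumes "-1 / exp 1 \<le> z"
  shows "lambert_W0 z * exp (lambert_W0 z) = z"
proof -
  have "z \<le> max 0 z * exp (max 0 z)"
  proof (cases "0 \<le> z")
    case True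
    then show ?thesis using mult_left_mono[OF one_le_exp_iff[THEN iffD2, OF True] True] by simp
  qed simp
  moreover have "-1 * exp (-1) \<le> z"
    using assms by (simp add: exp_minus divide_inverse)
  moreover have "continuous_on {-1..max 0 z} (\<lambda>x. x * exp x)"
    by (intro continuous_intros)
  ultimately have "\<exists>w\<ge>-1. w \<le> max 0 z \<and> w * exp w = z"
    by (intro IVT') auto
  then obtain w where "-1 \<le> w" and "z = w * exp w" by auto
  then show ?thesis by (simp add: lambert_W0_mult_exp)
qed

lemma lambert_W0_pos:
  assumes "0 < z"
  shows "0 < lambert_W0 z"
proof (rule ccontr)
  assume "\<not> 0 < lambert_W0 z"
  then have "lambert_W0 z * exp (lambert_W0 z) \<le> 0" by (simp add: mult_nonpos_nonneg)
  moreover have "-1 / exp 1 \<le> z"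
    using assms by (intro order.trans[OF _ less_imp_le[OF assms]]) simp
  ultimately show False using lambert_W0_inverse assms by simp
qed

text \<open>For \<open>b \<le> 0\<close> the argument of \<open>lambert_W0\<close> may lie below \<open>-1/e\<close>, where its value is an
  unspecified \<open>THE\<close>; the \<open>max 0\<close> makes the conclusion trivial in that case.\<close>

lemma lambert_degree_threshold:
  fixes a b :: real and s :: nat
  assumes "0 < a" and "\<lfloor>b / lambert_W0 (b / (exp 1 * a))\<rfloor> \<le> int s"
  shows "b \<le> max 0 (Suc s * ln (Suc s / (exp 1 * a)))"
proof (cases "b \<le> 0")
  case False
  define w where "w = lambert_W0 (b / (exp 1 * a))"
  have z_pos: "0 < b / (exp 1 * a)" using False assms by simp
  then have "0 < w" unfolding w_def by (rule lambert_W0_pos)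
  have "-1 / exp 1 \<le> b / (exp 1 * a)"
    by (intro order.trans[OF _ less_imp_le[OF z_pos]]) simp
  then have w_eq: "w * exp w = b / (exp 1 * a)"
    unfolding w_def by (rule lambert_W0_inverse)
  have "b / w < Suc s"
    using assms(2) unfolding w_def[symmetric] by linarith
  moreover have "b / w = exp 1 * a * exp w"
    using w_eq \<open>0 < w\<close> assms by (simp add: field_simps)
  ultimately have "exp w < Suc s / (exp 1 * a)"
    using assms by (simp add: field_simps)
  then have "w < ln (Suc s / (exp 1 * a))"
    by (metis exp_gt_zero exp_less_cancel_iff exp_ln order.strict_trans)
  then have "b / w * w \<le> Suc s * ln (Suc s / (exp 1 * a))"
    using \<open>b / w < Suc s\<close> \<open>0 < w\<close> by (intro mult_mono) auto
  then show ?thesis using \<open>0 < w\<close> by simp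
qed simp

lemma inner_row_le_norm_2_inf:
  fixes K :: "real^'d^'n"
  shows "K $ i \<bullet> K $ i \<le> (norm_2_inf K)\<^sup>2"
proof -
  have "norm (K $ i) \<le> norm_2_inf K"
    unfolding norm_2_inf_def by (rule Max_ge) auto
  then show ?thesis by (simp add: dot_square_norm power_mono)
qed

theorem lemma3:
  fixes K :: "real^'d^'n" and \<beta> \<tau> \<epsilon> :: real
  assumes "norm_2_inf K > 0" and "\<beta> > 0" and "\<tau> > 0" and "\<epsilon> > 0"
  defines "H \<equiv> (\<chi> i l. exp (\<beta> / \<tau>\<^sup>2 * (K $ i \<bullet> K $ l)) :: real^'n^'n)"
    and "T \<equiv> (\<lambda>s::nat. (\<chi> i l. \<Sum>p = 0..s. (1 / fact p) * (\<beta> / \<tau>\<^sup>2 * (K $ i \<bullet> K $ l)) ^ p)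
               :: real^'n^'n)"
    and "s_tilde \<equiv> (\<lambda>\<epsilon>'. (ln (real CARD('n) / \<epsilon>') + \<beta> * (norm_2_inf K)\<^sup>2 / \<tau>\<^sup>2) /
            lambert_W0 (ln (real CARD('n) / \<epsilon>') * \<tau>\<^sup>2 / (exp 1 * \<beta> * (norm_2_inf K)\<^sup>2)
                        + 1 / exp 1))"
  shows "\<forall>s::nat. int s \<ge> \<lfloor>s_tilde \<epsilon>\<rfloor> \<longrightarrow> nuclear_norm (H - T s) \<le> \<epsilon>"
proof (intro allI impI)
  fix s :: nat
  assume s_ge: "int s \<ge> \<lfloor>s_tilde \<epsilon>\<rfloor>"
  define c where "c = \<beta> / \<tau>\<^sup>2"
  define a where "a = c * (norm_2_inf K)\<^sup>2"
  define L where "L = ln (real CARD('n) / \<epsilon>)"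
  have "0 < c" and "0 < a" using assms by (simp_all add: a_def c_def)
  have "L * \<tau>\<^sup>2 / (exp 1 * \<beta> * (norm_2_inf K)\<^sup>2) + 1 / exp 1 = (L + a) / (exp 1 * a)"
    using assms by (simp add: a_def c_def field_simps)
  then have "s_tilde \<epsilon> = (L + a) / lambert_W0 ((L + a) / (exp 1 * a))"
    unfolding s_tilde_def L_def[symmetric] by (simp add: a_def c_def)
  then have threshold: "L + a \<le> max 0 (Suc s * ln (Suc s / (exp 1 * a)))"
    using lambert_degree_threshold[OF \<open>0 < a\<close>] s_ge by simp
  have "H - T s = (\<chi> i l. exp_tail s (c * (K $ i \<bullet> K $ l)))"
    by (simp add: H_def T_def exp_tail_def c_def vec_eq_iff)
  then have "nuclear_norm (H - T s) = (\<Sum>i\<in>UNIV. exp_tail s (c * (K $ i \<bullet> K $ i)))"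
    using psd_matrix_exp_tail_gram[where k = "\<lambda>i. K $ i"] \<open>0 < c\<close>
    by (simp add: nuclear_norm_psd_matrix trace_def)
  also have "\<dots> \<le> (\<Sum>i\<in>(UNIV::'n set). exp (- L))"
    using threshold \<open>0 < a\<close> \<open>0 < c\<close>
    by (intro sum_mono exp_tail_le_exp_minus) (auto simp: a_def inner_row_le_norm_2_inf)
  also have "\<dots> = \<epsilon>"
    using assms by (simp add: L_def exp_minus)
  finally show "nuclear_norm (H - T s) \<le> \<epsilon>" .
qed

end
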